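(* Let a loop-tangle diagram be minimal, i.e. the disc bounded by its loop contains no $1$-sided and no $2$-sided faces. Then inside the disc there is at least one of the following: a triangular face one of whose sides is a connected subarc of the loop; two triangular faces sharing a side; a quadrilateral face sharing at least one side with a triangular face; or a pentagonal face sharing at least four of its sides with triangular faces.
   Context: In an oriented knot diagram, a loop is a subarc $\gamma^\dagger$ of the knot such that (1) $\gamma^\dagger$ has exactly one self-crossing $u$, forming a loop bounding a disc $R$; (2) apart from $u$, at every crossing $\gamma^\dagger$ meets, $\gamma^\dagger$ is the under-strand (or at every such crossing it is the over-strand); (3) the two edges incident to $u$ not on the loop lie outside $R$. The tangle consists of the arcs of the knot inside $R$, each crossing the loop at its two endpoints; loop plus tangle is the loop-tangle diagram. Its faces are the faces inside $R$ of the planar $4$-valent graph formed by the loop and tangle (vertices: $u$, crossings of the tangle with the loop, and crossings of the tangle inside $R$); an $N$-sided face (triangle for $N=3$, quadrilateral for $N=4$, pentagon for $N=5$) is one bounded by $N$ edges. *)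

theory Defs
  imports Main
begin

text \<open>
The planar 4-valent graph formed by the loop and the tangle inside the disc R is
encoded as a connected planar combinatorial map (darts D, fixed-point-free edge
involution alpha, vertex rotation sigma, faces = orbits of sigma o alpha), in which the
whole exterior of R is collapsed to a single distinguished face Ext whose boundary is the loop.
\<close>

definition orb :: "('a \<Rightarrow> 'a) \<Rightarrow> 'a \<Rightarrow> 'a set" where
  "orb f x = range (\<lambda>n. (f ^^ n) x)"

definition verts :: "'a set \<Rightarrow> ('a \<Rightarrow> 'a) \<Rightarrow> 'a set set" where
  "verts D \<sigma> = orb \<sigma> ` D"

definition edges :: "'a set \<Rightarrow> ('a \<Rightarrow> 'a) \<Rightarrow> 'a set set" where
  "edges D \<alpha> = orb \<alpha> ` D"

definition face_of :: "('a \<Rightarrow> 'a) \<Rightarrow> ('a \<Rightarrow> 'a) \<Rightarrow> 'a \<Rightarrow> 'a set" where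
  "face_of \<alpha> \<sigma> d = orb (\<sigma> \<circ> \<alpha>) d"

definition faces :: "'a set \<Rightarrow> ('a \<Rightarrow> 'a) \<Rightarrow> ('a \<Rightarrow> 'a) \<Rightarrow> 'a set set" where
  "faces D \<alpha> \<sigma> = face_of \<alpha> \<sigma> ` D"

definition combinatorial_map :: "'a set \<Rightarrow> ('a \<Rightarrow> 'a) \<Rightarrow> ('a \<Rightarrow> 'a) \<Rightarrow> bool" where
  "combinatorial_map D \<alpha> \<sigma> \<longleftrightarrow>
     finite D \<and> bij_betw \<alpha> D D \<and> bij_betw \<sigma> D D \<and>
     (\<forall>d\<in>D. \<alpha> d \<noteq> d \<and> \<alpha> (\<alpha> d) = d)"

definition connected_map :: "'a set \<Rightarrow> ('a \<Rightarrow> 'a) \<Rightarrow> ('a \<Rightarrow> 'a) \<Rightarrow> bool" where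
  "connected_map D \<alpha> \<sigma> \<longleftrightarrow>
     (\<forall>x\<in>D. \<forall>y\<in>D. (x, y) \<in> {(a, b). a \<in> D \<and> (b = \<alpha> a \<or> b = \<sigma> a)}\<^sup>*)"

definition planar_map :: "'a set \<Rightarrow> ('a \<Rightarrow> 'a) \<Rightarrow> ('a \<Rightarrow> 'a) \<Rightarrow> bool" where
  "planar_map D \<alpha> \<sigma> \<longleftrightarrow>
     combinatorial_map D \<alpha> \<sigma> \<and> connected_map D \<alpha> \<sigma> \<and>
     int (card (verts D \<sigma>)) - int (card (edges D \<alpha>)) + int (card (faces D \<alpha> \<sigma>)) = 2"

definition on_loop :: "('a \<Rightarrow> 'a) \<Rightarrow> 'a set \<Rightarrow> 'a \<Rightarrow> bool" where
  "on_loop \<sigma> Ext d \<longleftrightarrow> orb \<sigma> d \<inter> Ext \<noteq> {}"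

text \<open>Tangle darts: darts of edges not on the loop.  Straight-ahead continuation
  of a strand through a 4-valent crossing: the opposite dart.\<close>
definition tangle_dart :: "'a set \<Rightarrow> ('a \<Rightarrow> 'a) \<Rightarrow> 'a set \<Rightarrow> 'a \<Rightarrow> bool" where
  "tangle_dart D \<alpha> Ext d \<longleftrightarrow> d \<in> D \<and> d \<notin> Ext \<and> \<alpha> d \<notin> Ext"

definition straight :: "('a \<Rightarrow> 'a) \<Rightarrow> ('a \<Rightarrow> 'a) \<Rightarrow> 'a \<Rightarrow> 'a" where
  "straight \<alpha> \<sigma> d = \<sigma> (\<sigma> (\<alpha> d))"

text \<open>Loop-tangle diagram:
  \<^item> planar map, Ext is a face (the exterior of the disc R);
  \<^item> the loop (boundary of Ext) is a simple closed curve: no edge has Ext on both sides,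
    and the vertices met along Ext are pairwise distinct;
  \<^item> vertices on the loop have degree 3 inside R (tangle endpoints), except exactly
    one of degree 2 (the self-crossing u, whose other two edges lie outside R);
  \<^item> vertices inside R are 4-valent crossings;
  \<^item> the tangle consists of arcs: following any tangle strand straight ahead through
    crossings always reaches the loop (no closed components).\<close>
definition loop_tangle_map :: "'a set \<Rightarrow> ('a \<Rightarrow> 'a) \<Rightarrow> ('a \<Rightarrow> 'a) \<Rightarrow> 'a set \<Rightarrow> bool" where
  "loop_tangle_map D \<alpha> \<sigma> Ext \<longleftrightarrow>
     planar_map D \<alpha> \<sigma> \<and>
     Ext \<in> faces D \<alpha> \<sigma> \<and>
     (\<forall>d\<in>Ext. \<alpha> d \<notin> Ext) \<and>
     inj_on (orb \<sigma>) Ext \<and>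
     (\<forall>d\<in>Ext. card (orb \<sigma> d) \<in> {2, 3}) \<and>
     card {v \<in> verts D \<sigma>. v \<inter> Ext \<noteq> {} \<and> card v = 2} = 1 \<and>
     (\<forall>d\<in>D. \<not> on_loop \<sigma> Ext d \<longrightarrow> card (orb \<sigma> d) = 4) \<and>
     (\<forall>d. tangle_dart D \<alpha> Ext d \<longrightarrow>
        (\<exists>n. on_loop \<sigma> Ext (\<alpha> ((straight \<alpha> \<sigma> ^^ n) d))))"

definition inner_faces :: "'a set \<Rightarrow> ('a \<Rightarrow> 'a) \<Rightarrow> ('a \<Rightarrow> 'a) \<Rightarrow> 'a set \<Rightarrow> 'a set set" where
  "inner_faces D \<alpha> \<sigma> Ext = faces D \<alpha> \<sigma> - {Ext}"

text \<open>Minimal: no 1-sided and no 2-sided faces inside R.  The number of sides of a face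
  is the length of its boundary walk, i.e. the number of darts in the orbit.\<close>
definition minimal_ltd :: "'a set \<Rightarrow> ('a \<Rightarrow> 'a) \<Rightarrow> ('a \<Rightarrow> 'a) \<Rightarrow> 'a set \<Rightarrow> bool" where
  "minimal_ltd D \<alpha> \<sigma> Ext \<longleftrightarrow> (\<forall>F\<in>inner_faces D \<alpha> \<sigma> Ext. card F \<noteq> 1 \<and> card F \<noteq> 2)"

definition share_side :: "('a \<Rightarrow> 'a) \<Rightarrow> 'a set \<Rightarrow> 'a set \<Rightarrow> bool" where
  "share_side \<alpha> F G \<longleftrightarrow> (\<exists>d\<in>F. \<alpha> d \<in> G)"

end

theory Submission
  imports Defs "HOL-Combinatorics.Orbits"
begin

text \<open>
  Euler's formula, together with the vertex degrees (4 at the crossings inside the disc, 3 on the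
  loop except 2 at the self-crossing), gives \<open>\<Sum>F (4 - |F|) = 3\<close> over the faces inside the disc.
  Suppose none of the four configurations occurs. Minimality makes every face at least a triangle,
  and every side of a triangle is then shared with a face of at least five sides (a triangle cannot
  be glued to itself, as this would create a vertex of degree one); a pentagon borders at most
  three triangles. Let each triangle send charge 1/3 across each of its sides: triangles end with
  charge 0, a pentagon with at most \<open>-1 + 3/3 = 0\<close> and an \<open>n\<close>-gon with \<open>n \<ge> 6\<close> with at most
  \<open>4 - n + n/3 \<le> 0\<close>. So the total charge is not positive, contradicting the value 3.
\<close>

section \<open>Orbits of a bijection of a finite set\<close>

lemma self_in_orb [simp]: "x \<in> orb f x"
  unfolding orb_def by (metis funpow_0 rangeI)

lemma funpow_in_orb: "(f ^^ n) x \<in> orb f x"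
  unfolding orb_def by blast

lemma orb_subset:
  assumes "f ` D \<subseteq> D" "x \<in> D"
  shows "orb f x \<subseteq> D"
proof -
  have "(f ^^ n) x \<in> D" for n
    using assms by (induction n) auto
  then show ?thesis
    unfolding orb_def by blast
qed

lemma orb_fixpoint:
  assumes "f x = x"
  shows "orb f x = {x}"
proof -
  have "(f ^^ n) x = x" for n
    by (induction n) (auto simp: assms)
  then show ?thesis
    unfolding orb_def by auto
qed

lemma orb_involution:
  assumes "f (f x) = x"
  shows "orb f x = {x, f x}"
proof -
  have "orb f x \<subseteq> {x, f x}"
    using assms by (intro orb_subset) auto
  moreover have "f x \<in> orb f x"
    using funpow_in_orb[where n = 1] by simp
  ultimately show ?thesis
    by auto
qed

lemma funpow_perm_restrict:
  assumes "f ` D \<subseteq> D" "x \<in> D"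
  shows "(perm_restrict f D ^^ n) x = (f ^^ n) x"
proof (induction n)
  case (Suc n)
  have "(f ^^ n) x \<in> D"
    using orb_subset[OF assms] funpow_in_orb[where f = f and n = n and x = x] by blast
  then show ?case
    using Suc by (simp add: perm_restrict_simps)
qed simp

lemma orb_eq_orbit_perm_restrict:
  assumes "bij_betw f D D" "finite D" "x \<in> D"
  shows "permutation (perm_restrict f D)" and "orb f x = orbit (perm_restrict f D) x"
proof -
  have "perm_restrict f D permutes D"
    using assms(1) by (intro bij_imp_permutes) (auto simp: perm_restrict_def cong: bij_betw_cong)
  then show perm: "permutation (perm_restrict f D)"
    using assms(2) permutation_permutes by blast
  show "orb f x = orbit (perm_restrict f D) x"
    using assms funpow_perm_restrict[of f D x]
    unfolding orbit_altdef_permutation[OF perm] orb_def by (auto simp: bij_betw_def)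
qed

lemma orb_eq:
  assumes "bij_betw f D D" "finite D" "x \<in> D" "y \<in> orb f x"
  shows "orb f y = orb f x"
proof -
  have "y \<in> D"
    using assms orb_subset[of f D x] by (auto simp: bij_betw_def)
  note g = orb_eq_orbit_perm_restrict[OF assms(1,2)]
  have "orbit (perm_restrict f D) y = orbit (perm_restrict f D) x"
    using orbit_cyclic_eq3[OF cyclic_on_orbit'[OF g(1)[OF assms(3)]]] assms(4) g(2)[OF assms(3)]
    by simp
  then show ?thesis
    using g(2) assms(3) \<open>y \<in> D\<close> by simp
qed

lemma orb_disjoint:
  assumes "bij_betw f D D" "finite D" "x \<in> D" "y \<in> D" "orb f x \<noteq> orb f y"
  shows "orb f x \<inter> orb f y = {}"
  using assms orb_eq[OF assms(1,2,3)] orb_eq[OF assms(1,2,4)] by blast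

lemma card_orb_eq_period:
  assumes "bij_betw f D D" "finite D" "x \<in> D"
  shows "(f ^^ card (orb f x)) x = x"
    and "orb f x = (\<lambda>k. (f ^^ k) x) ` {..<card (orb f x)}"
proof -
  let ?g = "perm_restrict f D"
  note g = orb_eq_orbit_perm_restrict[OF assms]
  have x_in: "x \<in> orbit ?g x"
    using permutation_self_in_orbit[OF g(1)] .
  define n where "n = funpow_dist1 ?g x x"
  have g_f: "(?g ^^ k) x = (f ^^ k) x" for k
    using assms funpow_perm_restrict[of f D x] by (auto simp: bij_betw_def)
  have orb: "orb f x = (\<lambda>k. (f ^^ k) x) ` {..<n}"
    using g(2) orbit_conv_funpow_dist1[OF x_in] unfolding n_def atLeast0LessThan g_f by simp
  have "inj_on (\<lambda>k. (f ^^ k) x) {..<n}"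
    using inj_on_funpow_dist1[OF x_in] unfolding n_def atLeast0LessThan g_f by simp
  then have card: "card (orb f x) = n"
    using orb by (simp add: card_image)
  show "(f ^^ card (orb f x)) x = x"
    using funpow_dist1_prop[OF x_in] g_f[of n] unfolding card n_def by simp
  show "orb f x = (\<lambda>k. (f ^^ k) x) ` {..<card (orb f x)}"
    using orb card by simp
qed

lemma card_Union_orbs:
  assumes "bij_betw f D D" "finite D" "S \<subseteq> orb f ` D"
  shows "card (\<Union>S) = (\<Sum>C\<in>S. card C)"
proof (rule card_Union_disjoint)
  show "pairwise disjnt S"
  proof (rule pairwiseI)
    fix A B
    assume "A \<in> S" "B \<in> S" "A \<noteq> B"
    then obtain x y where "x \<in> D" "y \<in> D" "A = orb f x" "B = orb f y"
      using assms(3) by blast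
    then show "disjnt A B"
      using orb_disjoint[OF assms(1,2)] \<open>A \<noteq> B\<close> unfolding disjnt_def by blast
  qed
  show "finite C" if C: "C \<in> S" for C
  proof -
    obtain x where "x \<in> D" "C = orb f x"
      using C assms(3) by blast
    then show ?thesis
      using assms(1,2) orb_subset[of f D x] finite_subset by (auto simp: bij_betw_def)
  qed
qed

lemma sum_card_orbs:
  assumes "bij_betw f D D" "finite D"
  shows "(\<Sum>C\<in>orb f ` D. card C) = card D"
proof -
  have "f ` D \<subseteq> D"
    using assms(1) by (simp add: bij_betw_def)
  then have "\<Union>(orb f ` D) = D"
    using orb_subset[of f D] self_in_orb[of _ f] by (intro equalityI UN_least) auto
  then show ?thesis
    using card_Union_orbs[OF assms subset_refl] by simp
qed

section \<open>Faces of a combinatorial map\<close>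

lemma combinatorial_map_face_bij:
  assumes "combinatorial_map D \<alpha> \<sigma>"
  shows "bij_betw (\<sigma> \<circ> \<alpha>) D D"
  using assms unfolding combinatorial_map_def by (auto intro: bij_betw_trans)

lemma face_of_subset:
  assumes "combinatorial_map D \<alpha> \<sigma>" "d \<in> D"
  shows "face_of \<alpha> \<sigma> d \<subseteq> D"
  unfolding face_of_def
  using orb_subset[of "\<sigma> \<circ> \<alpha>" D d] combinatorial_map_face_bij[OF assms(1)] assms(2)
  by (simp add: bij_betw_def)

lemma face_of_eq:
  assumes "combinatorial_map D \<alpha> \<sigma>" "d \<in> D" "e \<in> face_of \<alpha> \<sigma> d"
  shows "face_of \<alpha> \<sigma> e = face_of \<alpha> \<sigma> d"
  using assms orb_eq[OF combinatorial_map_face_bij[OF assms(1)]]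
  unfolding face_of_def combinatorial_map_def by blast

lemma faces_eq_face_of:
  assumes "combinatorial_map D \<alpha> \<sigma>" "F \<in> faces D \<alpha> \<sigma>" "d \<in> F"
  shows "F = face_of \<alpha> \<sigma> d"
proof -
  obtain e where "e \<in> D" "F = face_of \<alpha> \<sigma> e"
    using assms(2) unfolding faces_def by blast
  then show ?thesis
    using face_of_eq[OF assms(1)] assms(3) by metis
qed

lemma faces_subset:
  assumes "combinatorial_map D \<alpha> \<sigma>" "F \<in> faces D \<alpha> \<sigma>"
  shows "F \<subseteq> D"
  using assms(2) face_of_subset[OF assms(1)] unfolding faces_def by blast

lemma faces_disjoint:
  assumes "combinatorial_map D \<alpha> \<sigma>" "F \<in> faces D \<alpha> \<sigma>" "G \<in> faces D \<alpha> \<sigma>" "F \<noteq> G"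
  shows "F \<inter> G = {}"
  using faces_eq_face_of[OF assms(1)] assms(2-4) by blast

lemma card_Union_faces:
  assumes "combinatorial_map D \<alpha> \<sigma>" "S \<subseteq> faces D \<alpha> \<sigma>"
  shows "card (\<Union>S) = (\<Sum>F\<in>S. card F)"
  using assms card_Union_orbs[OF combinatorial_map_face_bij[OF assms(1)]]
  unfolding faces_def face_of_def combinatorial_map_def by blast

lemma sum_card_faces:
  assumes "combinatorial_map D \<alpha> \<sigma>"
  shows "(\<Sum>F\<in>faces D \<alpha> \<sigma>. card F) = card D"
  using assms sum_card_orbs[OF combinatorial_map_face_bij[OF assms]]
  unfolding faces_def face_of_def combinatorial_map_def by simp

lemma card_darts_eq_twice_edges:
  assumes "combinatorial_map D \<alpha> \<sigma>"
  shows "card D = 2 * card (edges D \<alpha>)"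
proof -
  have "card e = 2" if "e \<in> edges D \<alpha>" for e
    using that assms orb_involution[of \<alpha>] unfolding edges_def combinatorial_map_def by auto
  then show ?thesis
    using assms sum_card_orbs[of \<alpha> D] unfolding edges_def combinatorial_map_def by simp
qed

lemma triangle_not_self_adjacent:
  assumes cm: "combinatorial_map D \<alpha> \<sigma>" and no_fix: "\<forall>d\<in>D. \<sigma> d \<noteq> d"
    and y: "y \<in> D" and tri: "card (face_of \<alpha> \<sigma> y) = 3"
  shows "\<alpha> y \<notin> face_of \<alpha> \<sigma> y"
proof
  let ?\<phi> = "\<sigma> \<circ> \<alpha>"
  note period = card_orb_eq_period[OF combinatorial_map_face_bij[OF cm] _ y]
  have fin: "finite D"
    using cm unfolding combinatorial_map_def by blast
  have "{..<3::nat} = {0, 1, 2}"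
    by auto
  then have face: "face_of \<alpha> \<sigma> y = {y, ?\<phi> y, ?\<phi> (?\<phi> y)}"
    using period(2)[OF fin] tri unfolding face_of_def by (simp add: numeral_2_eq_2)
  have cycle: "?\<phi> (?\<phi> (?\<phi> y)) = y"
    using period(1)[OF fin] tri unfolding face_of_def by (simp add: numeral_3_eq_3)
  have "\<alpha> y \<in> D" "\<alpha> (\<alpha> y) = y" "\<alpha> y \<noteq> y"
    using cm y unfolding combinatorial_map_def bij_betw_def by auto
  moreover assume "\<alpha> y \<in> face_of \<alpha> \<sigma> y"
  ultimately show False
    using face cycle no_fix y by auto
qed

section \<open>Euler's formula for loop-tangle maps\<close>

lemma loop_tangle_map_combinatorial_map:
  "loop_tangle_map D \<alpha> \<sigma> Ext \<Longrightarrow> combinatorial_map D \<alpha> \<sigma>"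
  unfolding loop_tangle_map_def planar_map_def by blast

lemma loop_tangle_map_Ext_subset:
  "loop_tangle_map D \<alpha> \<sigma> Ext \<Longrightarrow> Ext \<subseteq> D"
  using faces_subset loop_tangle_map_combinatorial_map unfolding loop_tangle_map_def by blast

lemma loop_tangle_map_vertex_meets_Ext:
  assumes lt: "loop_tangle_map D \<alpha> \<sigma> Ext" and d: "d \<in> D"
  shows "orb \<sigma> d \<inter> Ext \<noteq> {} \<longleftrightarrow> orb \<sigma> d \<in> orb \<sigma> ` Ext"
proof
  assume "orb \<sigma> d \<inter> Ext \<noteq> {}"
  then obtain e where "e \<in> Ext" "e \<in> orb \<sigma> d"
    by blast
  moreover have "bij_betw \<sigma> D D" "finite D"
    using loop_tangle_map_combinatorial_map[OF lt] unfolding combinatorial_map_def by auto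
  ultimately have "orb \<sigma> e = orb \<sigma> d"
    using orb_eq[of \<sigma> D d e] d by blast
  then show "orb \<sigma> d \<in> orb \<sigma> ` Ext"
    using \<open>e \<in> Ext\<close> by (metis image_eqI)
next
  assume "orb \<sigma> d \<in> orb \<sigma> ` Ext"
  then show "orb \<sigma> d \<inter> Ext \<noteq> {}"
    using self_in_orb by fastforce
qed

lemma loop_tangle_map_card_vertex:
  assumes lt: "loop_tangle_map D \<alpha> \<sigma> Ext" and d: "d \<in> D"
  shows "card (orb \<sigma> d) \<in> {2, 3, 4}"
proof (cases "on_loop \<sigma> Ext d")
  case True
  then obtain e where "e \<in> Ext" "orb \<sigma> d = orb \<sigma> e"
    using loop_tangle_map_vertex_meets_Ext[OF lt d] unfolding on_loop_def by blast
  then show ?thesis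
    using lt unfolding loop_tangle_map_def by auto
next
  case False
  then show ?thesis
    using lt d unfolding loop_tangle_map_def by auto
qed

lemma loop_tangle_map_no_fixpoint:
  assumes "loop_tangle_map D \<alpha> \<sigma> Ext" "d \<in> D"
  shows "\<sigma> d \<noteq> d"
  using loop_tangle_map_card_vertex[OF assms] orb_fixpoint[of \<sigma> d] by auto

lemma loop_tangle_map_loop_degree_sum:
  assumes lt: "loop_tangle_map D \<alpha> \<sigma> Ext"
  shows "(\<Sum>v\<in>orb \<sigma> ` Ext. card v) + 1 = 3 * card Ext"
proof -
  define L where "L = orb \<sigma> ` Ext"
  have inj: "inj_on (orb \<sigma>) Ext"
    and deg_loop: "\<And>d. d \<in> Ext \<Longrightarrow> card (orb \<sigma> d) \<in> {2, 3}"
    and one_deg2: "card {v \<in> verts D \<sigma>. v \<inter> Ext \<noteq> {} \<and> card v = 2} = 1"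
    using lt unfolding loop_tangle_map_def by blast+
  have "finite Ext"
    using loop_tangle_map_Ext_subset[OF lt] loop_tangle_map_combinatorial_map[OF lt] finite_subset
    unfolding combinatorial_map_def by blast
  then have "finite L"
    unfolding L_def by simp
  have "{v \<in> verts D \<sigma>. v \<inter> Ext \<noteq> {} \<and> card v = 2} = {v \<in> L. card v = 2}"
    using loop_tangle_map_vertex_meets_Ext[OF lt] loop_tangle_map_Ext_subset[OF lt]
    unfolding verts_def L_def by blast
  then have "card {v \<in> L. card v = 2} = 1"
    using one_deg2 by simp
  moreover have "(\<Sum>v\<in>L. card v + (if card v = 2 then 1 else 0)) = (\<Sum>v\<in>L. 3)"
    using deg_loop unfolding L_def by (intro sum.cong) auto
  moreover have "(\<Sum>v\<in>L. if card v = 2 then 1 else 0) = card {v \<in> L. card v = 2}"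
    using \<open>finite L\<close> by (simp add: sum.If_cases Int_def)
  moreover have "card L = card Ext"
    using card_image[OF inj] unfolding L_def .
  ultimately show ?thesis
    unfolding L_def by (simp add: sum.distrib)
qed

lemma loop_tangle_map_degree_sum:
  assumes lt: "loop_tangle_map D \<alpha> \<sigma> Ext"
  shows "4 * card (verts D \<sigma>) = card D + card Ext + 1"
proof -
  define V where "V = verts D \<sigma>"
  define L where "L = orb \<sigma> ` Ext"
  have bij: "bij_betw \<sigma> D D" and fin: "finite D"
    using loop_tangle_map_combinatorial_map[OF lt] unfolding combinatorial_map_def by auto
  have inj: "inj_on (orb \<sigma>) Ext"
    and deg_inner: "\<And>d. d \<in> D \<Longrightarrow> \<not> on_loop \<sigma> Ext d \<Longrightarrow> card (orb \<sigma> d) = 4"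
    using lt unfolding loop_tangle_map_def by blast+
  have LV: "L \<subseteq> V"
    using loop_tangle_map_Ext_subset[OF lt] unfolding L_def V_def verts_def by blast
  have finV: "finite V"
    using fin unfolding V_def verts_def by simp
  have interior: "card v = 4" if v: "v \<in> V - L" for v
  proof -
    obtain d where "d \<in> D" "v = orb \<sigma> d"
      using v unfolding V_def verts_def by blast
    moreover from this have "\<not> on_loop \<sigma> Ext d"
      using v loop_tangle_map_vertex_meets_Ext[OF lt] unfolding on_loop_def L_def by blast
    ultimately show ?thesis
      using deg_inner by blast
  qed
  have "card D = (\<Sum>v\<in>V. card v)"
    using sum_card_orbs[OF bij fin] unfolding V_def verts_def by simp
  also have "\<dots> = (\<Sum>v\<in>V - L. card v) + (\<Sum>v\<in>L. card v)"
    using sum.subset_diff[OF LV finV] by simp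
  also have "(\<Sum>v\<in>V - L. card v) = 4 * card (V - L)"
    using interior by simp
  finally have "card D + 1 = 4 * card (V - L) + 3 * card Ext"
    using loop_tangle_map_loop_degree_sum[OF lt] unfolding L_def by simp
  moreover have "card V = card (V - L) + card Ext"
    using card_Diff_subset[OF finite_subset[OF LV finV] LV] card_mono[OF finV LV] card_image[OF inj]
    unfolding L_def by simp
  ultimately show ?thesis
    unfolding V_def by simp
qed

lemma loop_tangle_map_curvature:
  assumes lt: "loop_tangle_map D \<alpha> \<sigma> Ext"
  shows "(\<Sum>F\<in>inner_faces D \<alpha> \<sigma> Ext. 4 - int (card F)) = 3"
proof -
  have cm: "combinatorial_map D \<alpha> \<sigma>"
    using loop_tangle_map_combinatorial_map[OF lt] .
  have Ext: "Ext \<in> faces D \<alpha> \<sigma>" and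
    euler: "int (card (verts D \<sigma>)) - int (card (edges D \<alpha>)) + int (card (faces D \<alpha> \<sigma>)) = 2"
    using lt unfolding loop_tangle_map_def planar_map_def by auto
  have finF: "finite (faces D \<alpha> \<sigma>)"
    using cm unfolding combinatorial_map_def faces_def by simp
  have "(\<Sum>F\<in>inner_faces D \<alpha> \<sigma> Ext. card F) + card Ext = card D"
    using sum_card_faces[OF cm] sum.remove[OF finF Ext, of card] unfolding inner_faces_def by simp
  moreover have "card (inner_faces D \<alpha> \<sigma> Ext) + 1 = card (faces D \<alpha> \<sigma>)"
    using card.remove[OF finF Ext] unfolding inner_faces_def by simp
  moreover have "(\<Sum>F\<in>inner_faces D \<alpha> \<sigma> Ext. 4 - int (card F))
      = 4 * int (card (inner_faces D \<alpha> \<sigma> Ext)) - int (\<Sum>F\<in>inner_faces D \<alpha> \<sigma> Ext. card F)"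
    by (simp add: sum_subtractf of_nat_sum)
  ultimately show ?thesis
    using euler card_darts_eq_twice_edges[OF cm] loop_tangle_map_degree_sum[OF lt] by linarith
qed

section \<open>Discharging\<close>

lemma minimal_ltd_inner_face_card_ge_3:
  assumes lt: "loop_tangle_map D \<alpha> \<sigma> Ext" and min: "minimal_ltd D \<alpha> \<sigma> Ext"
    and F: "F \<in> inner_faces D \<alpha> \<sigma> Ext"
  shows "3 \<le> card F"
proof -
  have cm: "combinatorial_map D \<alpha> \<sigma>"
    using loop_tangle_map_combinatorial_map[OF lt] .
  have FF: "F \<in> faces D \<alpha> \<sigma>"
    using F unfolding inner_faces_def by blast
  then obtain d where "F = face_of \<alpha> \<sigma> d"
    unfolding faces_def by blast
  then have "F \<noteq> {}"
    using self_in_orb[of d "\<sigma> \<circ> \<alpha>"] unfolding face_of_def by blast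
  moreover have "finite F"
    using faces_subset[OF cm FF] cm finite_subset unfolding combinatorial_map_def by blast
  ultimately have "card F \<noteq> 0"
    by simp
  moreover have "card F \<noteq> 1" "card F \<noteq> 2"
    using min F unfolding minimal_ltd_def by auto
  ultimately show ?thesis
    by linarith
qed

lemma triangle_neighbour_card_ge_5:
  assumes lt: "loop_tangle_map D \<alpha> \<sigma> Ext" and min: "minimal_ltd D \<alpha> \<sigma> Ext"
    and T: "T \<in> inner_faces D \<alpha> \<sigma> Ext" "card T = 3" and d: "d \<in> T"
    and no_Ext: "\<not> share_side \<alpha> T Ext"
    and no_triangle: "\<And>T'. T' \<in> inner_faces D \<alpha> \<sigma> Ext \<Longrightarrow> card T' = 3 \<Longrightarrow> T \<noteq> T'
      \<Longrightarrow> \<not> share_side \<alpha> T T'"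
    and no_quadrilateral: "\<And>Q. Q \<in> inner_faces D \<alpha> \<sigma> Ext \<Longrightarrow> card Q = 4
      \<Longrightarrow> \<not> share_side \<alpha> Q T"
  shows "face_of \<alpha> \<sigma> (\<alpha> d) \<in> inner_faces D \<alpha> \<sigma> Ext \<and> 5 \<le> card (face_of \<alpha> \<sigma> (\<alpha> d))"
proof -
  let ?G = "face_of \<alpha> \<sigma> (\<alpha> d)"
  have cm: "combinatorial_map D \<alpha> \<sigma>"
    using loop_tangle_map_combinatorial_map[OF lt] .
  have TF: "T \<in> faces D \<alpha> \<sigma>"
    using T unfolding inner_faces_def by blast
  have dD: "d \<in> D" and T_eq: "T = face_of \<alpha> \<sigma> d"
    using faces_subset[OF cm TF] faces_eq_face_of[OF cm TF] d by auto
  have adD: "\<alpha> d \<in> D" and aad: "\<alpha> (\<alpha> d) = d"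
    using cm dD unfolding combinatorial_map_def bij_betw_def by auto
  have G_side: "\<alpha> d \<in> ?G"
    unfolding face_of_def by simp
  have "share_side \<alpha> T ?G"
    using d G_side unfolding share_side_def by blast
  moreover have "share_side \<alpha> ?G T"
    using d G_side aad unfolding share_side_def by metis
  moreover have "?G \<noteq> Ext"
    using no_Ext d G_side unfolding share_side_def by auto
  then have GI: "?G \<in> inner_faces D \<alpha> \<sigma> Ext"
    using adD unfolding inner_faces_def faces_def by blast
  moreover have "?G \<noteq> T"
    using triangle_not_self_adjacent[OF cm _ dD] loop_tangle_map_no_fixpoint[OF lt] T(2) T_eq G_side
    by auto
  ultimately have "card ?G \<noteq> 3" "card ?G \<noteq> 4"
    using no_triangle no_quadrilateral T by metis+
  then show ?thesis
    using GI minimal_ltd_inner_face_card_ge_3[OF lt min GI] by auto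
qed

definition triangle_sides :: "('a \<Rightarrow> 'a) \<Rightarrow> ('a \<Rightarrow> 'a) \<Rightarrow> 'a set set \<Rightarrow> 'a set \<Rightarrow> 'a set" where
  "triangle_sides \<alpha> \<sigma> I P = {d \<in> P. face_of \<alpha> \<sigma> (\<alpha> d) \<in> I \<and> card (face_of \<alpha> \<sigma> (\<alpha> d)) = 3}"

lemma card_triangles_le_triangle_sides:
  assumes cm: "combinatorial_map D \<alpha> \<sigma>" and I: "I \<subseteq> faces D \<alpha> \<sigma>"
    and neighbour: "\<And>T d. T \<in> I \<Longrightarrow> card T = 3 \<Longrightarrow> d \<in> T \<Longrightarrow>
      face_of \<alpha> \<sigma> (\<alpha> d) \<in> I \<and> 5 \<le> card (face_of \<alpha> \<sigma> (\<alpha> d))"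
  shows "3 * card {T \<in> I. card T = 3} \<le> (\<Sum>P\<in>{P \<in> I. 5 \<le> card P}. card (triangle_sides \<alpha> \<sigma> I P))"
proof -
  define Tr where "Tr = {T \<in> I. card T = 3}"
  define Big where "Big = {P \<in> I. 5 \<le> card P}"
  have fin: "finite D" and inj: "inj_on \<alpha> D" and \<alpha>\<alpha>: "\<And>d. d \<in> D \<Longrightarrow> \<alpha> (\<alpha> d) = d"
    using cm unfolding combinatorial_map_def bij_betw_def by auto
  have finI: "finite I"
    using I fin finite_subset unfolding faces_def by blast
  have finP: "finite P" if "P \<in> I" for P
    using that I faces_subset[OF cm] fin finite_subset by blast
  have "3 * card Tr = (\<Sum>T\<in>Tr. card T)"
    unfolding Tr_def by simp
  also have "\<dots> = card (\<Union>Tr)"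
    using I by (intro card_Union_faces[OF cm, symmetric]) (auto simp: Tr_def)
  also have "\<dots> = card (\<alpha> ` \<Union>Tr)"
    using I faces_subset[OF cm] by (intro card_image[symmetric] inj_on_subset[OF inj]) (auto simp: Tr_def)
  also have "\<dots> \<le> card (\<Union>P\<in>Big. triangle_sides \<alpha> \<sigma> I P)"
  proof (rule card_mono)
    show "finite (\<Union>P\<in>Big. triangle_sides \<alpha> \<sigma> I P)"
      using finI finP unfolding Big_def triangle_sides_def by auto
    show "\<alpha> ` \<Union>Tr \<subseteq> (\<Union>P\<in>Big. triangle_sides \<alpha> \<sigma> I P)"
    proof clarify
      fix T d
      assume "T \<in> Tr" "d \<in> T"
      then have "T \<in> I" "card T = 3" "d \<in> D" "T = face_of \<alpha> \<sigma> d"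
        using I faces_subset[OF cm] faces_eq_face_of[OF cm] unfolding Tr_def by auto
      then show "\<alpha> d \<in> (\<Union>P\<in>Big. triangle_sides \<alpha> \<sigma> I P)"
        using neighbour[of T d] \<open>d \<in> T\<close> \<alpha>\<alpha>[of d] self_in_orb[of "\<alpha> d" "\<sigma> \<circ> \<alpha>"]
        unfolding Big_def triangle_sides_def face_of_def by auto
    qed
  qed
  also have "\<dots> = (\<Sum>P\<in>Big. card (triangle_sides \<alpha> \<sigma> I P))"
  proof (rule card_UN_disjoint)
    show "finite Big" "\<forall>P\<in>Big. finite (triangle_sides \<alpha> \<sigma> I P)"
      using finI finP unfolding Big_def triangle_sides_def by auto
    show "\<forall>P\<in>Big. \<forall>Q\<in>Big. P \<noteq> Q \<longrightarrow> triangle_sides \<alpha> \<sigma> I P \<inter> triangle_sides \<alpha> \<sigma> I Q = {}"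
      using faces_disjoint[OF cm] I unfolding Big_def triangle_sides_def by blast
  qed
  finally show ?thesis
    unfolding Tr_def Big_def .
qed

lemma discharging_curvature_nonpos:
  assumes cm: "combinatorial_map D \<alpha> \<sigma>" and I: "I \<subseteq> faces D \<alpha> \<sigma>"
    and ge_3: "\<And>F. F \<in> I \<Longrightarrow> 3 \<le> card F"
    and neighbour: "\<And>T d. T \<in> I \<Longrightarrow> card T = 3 \<Longrightarrow> d \<in> T \<Longrightarrow>
      face_of \<alpha> \<sigma> (\<alpha> d) \<in> I \<and> 5 \<le> card (face_of \<alpha> \<sigma> (\<alpha> d))"
    and pentagon: "\<And>P. P \<in> I \<Longrightarrow> card P = 5 \<Longrightarrow> card (triangle_sides \<alpha> \<sigma> I P) \<le> 3"
  shows "(\<Sum>F\<in>I. 4 - int (card F)) \<le> 0"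
proof -
  define Tr where "Tr = {T \<in> I. card T = 3}"
  define Big where "Big = {P \<in> I. 5 \<le> card P}"
  have fin: "finite D"
    using cm unfolding combinatorial_map_def by blast
  have finI: "finite I"
    using I fin unfolding faces_def by (simp add: finite_subset)
  have sides: "card (triangle_sides \<alpha> \<sigma> I P) \<le> 3 * (card P - 4)" if P: "P \<in> Big" for P
  proof (cases "card P = 5")
    case False
    have "finite P"
      using P I faces_subset[OF cm] fin finite_subset unfolding Big_def by blast
    then have "card (triangle_sides \<alpha> \<sigma> I P) \<le> card P"
      unfolding triangle_sides_def by (intro card_mono) auto
    then show ?thesis
      using False P unfolding Big_def by auto
  qed (use P pentagon in \<open>auto simp: Big_def\<close>)
  have "3 * card Tr \<le> (\<Sum>P\<in>Big. card (triangle_sides \<alpha> \<sigma> I P))"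
    unfolding Tr_def Big_def using cm I neighbour by (rule card_triangles_le_triangle_sides)
  also have "\<dots> \<le> (\<Sum>P\<in>Big. 3 * (card P - 4))"
    using sides by (rule sum_mono)
  finally have "card Tr \<le> (\<Sum>P\<in>Big. card P - 4)"
    by (simp flip: sum_distrib_left)
  then have "int (card Tr) \<le> (\<Sum>P\<in>Big. int (card P - 4))"
    by (simp flip: of_nat_sum)
  also have "\<dots> = (\<Sum>P\<in>Big. int (card P) - 4)"
    by (intro sum.cong) (auto simp: Big_def)
  finally have "int (card Tr) \<le> (\<Sum>P\<in>Big. int (card P) - 4)" .
  moreover have "(\<Sum>F\<in>I. 4 - int (card F))
      = (\<Sum>F\<in>I. (if card F = 3 then 1 else 0) - (if 5 \<le> card F then int (card F) - 4 else 0))"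
    using ge_3 by (intro sum.cong) force+
  moreover have "\<dots> = int (card Tr) - (\<Sum>P\<in>Big. int (card P) - 4)"
    using finI unfolding Tr_def Big_def by (simp add: sum_subtractf sum.If_cases Int_def)
  ultimately show ?thesis
    by linarith
qed

theorem proposition5p12:
  fixes D :: "'d set" and \<alpha> \<sigma> :: "'d \<Rightarrow> 'd" and Ext :: "'d set"
  assumes "loop_tangle_map D \<alpha> \<sigma> Ext"
    and "minimal_ltd D \<alpha> \<sigma> Ext"
  shows "(\<exists>T\<in>inner_faces D \<alpha> \<sigma> Ext. card T = 3 \<and> share_side \<alpha> T Ext)
       \<or> (\<exists>T1\<in>inner_faces D \<alpha> \<sigma> Ext. \<exists>T2\<in>inner_faces D \<alpha> \<sigma> Ext.
            T1 \<noteq> T2 \<and> card T1 = 3 \<and> card T2 = 3 \<and> share_side \<alpha> T1 T2)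
       \<or> (\<exists>Q\<in>inner_faces D \<alpha> \<sigma> Ext. \<exists>T\<in>inner_faces D \<alpha> \<sigma> Ext.
            card Q = 4 \<and> card T = 3 \<and> share_side \<alpha> Q T)
       \<or> (\<exists>P\<in>inner_faces D \<alpha> \<sigma> Ext. card P = 5 \<and>
            card {d \<in> P. face_of \<alpha> \<sigma> (\<alpha> d) \<in> inner_faces D \<alpha> \<sigma> Ext
                        \<and> card (face_of \<alpha> \<sigma> (\<alpha> d)) = 3} \<ge> 4)"
proof (rule ccontr)
  let ?I = "inner_faces D \<alpha> \<sigma> Ext"
  assume no_configuration: "\<not> ?thesis"
  have neighbour: "face_of \<alpha> \<sigma> (\<alpha> d) \<in> ?I \<and> 5 \<le> card (face_of \<alpha> \<sigma> (\<alpha> d))"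
    if "T \<in> ?I" "card T = 3" "d \<in> T" for T d
    using that no_configuration by (intro triangle_neighbour_card_ge_5[OF assms]) blast+
  have pentagon: "card (triangle_sides \<alpha> \<sigma> ?I P) \<le> 3" if "P \<in> ?I" "card P = 5" for P
    using that no_configuration unfolding triangle_sides_def by fastforce
  have "(\<Sum>F\<in>?I. 4 - int (card F)) \<le> 0"
  proof (rule discharging_curvature_nonpos)
    show "combinatorial_map D \<alpha> \<sigma>"
      using loop_tangle_map_combinatorial_map[OF assms(1)] .
    show "?I \<subseteq> faces D \<alpha> \<sigma>"
      unfolding inner_faces_def by blast
  qed (use neighbour pentagon minimal_ltd_inner_face_card_ge_3[OF assms] in auto)
  then show False
    using loop_tangle_map_curvature[OF assms(1)] by simp
qed

end
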